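(* Let $\mathbb{D}\subset\mathbb{C}$ be the unit disc and $\mathbb{B}^n\subset\mathbb{R}^n$ ($n\ge 3$) the open unit ball with boundary sphere $S^{n-1}$. Assume $F:\mathbb{D}\to\mathbb{B}^n$ is a conformal minimal immersion with $F(0)=0$, and that for some $z_0$ with $|z_0|=1$, $F$ extends to $z_0$ with $F(z_0)\in S^{n-1}$. If the differential $dF(z_0)$ exists, then $\|dF(z_0)\|\ge 1$.
   Context: A conformal minimal immersion $F=F(x,y)$, $z=x+iy$, is a harmonic immersion with $\langle F_x,F_x\rangle=\langle F_y,F_y\rangle$ and $\langle F_x,F_y\rangle=0$. For such a map $\|dF\|$ equals the common length $|F_x|=|F_y|$. *)

theory Defs
  imports "HOL-Analysis.Analysis"
begin

definition pdx :: "(complex \<Rightarrow> 'a::real_normed_vector) \<Rightarrow> complex \<Rightarrow> 'a" where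
  "pdx F z = frechet_derivative F (at z) 1"

definition pdy :: "(complex \<Rightarrow> 'a::real_normed_vector) \<Rightarrow> complex \<Rightarrow> 'a" where
  "pdy F z = frechet_derivative F (at z) \<i>"

definition harmonic_on :: "(complex \<Rightarrow> 'a::real_normed_vector) \<Rightarrow> complex set \<Rightarrow> bool" where
  "harmonic_on F S \<longleftrightarrow> open S \<and> F differentiable_on S \<and>
     pdx F differentiable_on S \<and> pdy F differentiable_on S \<and>
     continuous_on S (pdx (pdx F)) \<and> continuous_on S (pdy (pdx F)) \<and>
     continuous_on S (pdx (pdy F)) \<and> continuous_on S (pdy (pdy F)) \<and>
     (\<forall>z\<in>S. pdx (pdx F) z + pdy (pdy F) z = 0)"

text \<open>Conformal minimal immersion: harmonic, conformal (|F_x| = |F_y|, F_x . F_y = 0),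
  and an immersion (for conformal maps: F_x \<noteq> 0).\<close>
definition conformal_minimal_immersion_on :: "(complex \<Rightarrow> 'a::real_inner) \<Rightarrow> complex set \<Rightarrow> bool" where
  "conformal_minimal_immersion_on F S \<longleftrightarrow> harmonic_on F S \<and>
     (\<forall>z\<in>S. pdx F z \<bullet> pdx F z = pdy F z \<bullet> pdy F z \<and> pdx F z \<bullet> pdy F z = 0
            \<and> pdx F z \<noteq> 0)"

end

theory Submission
  imports Defs
begin

text \<open>
  The core is a Schwarz lemma \<open>|F z| \<le> |z|\<close>. For a conformal harmonic map \<open>ln |F|^2\<close> is
  subharmonic where \<open>F \<noteq> 0\<close>, since
  \<open>\<Delta> ln |F|^2 = 4 (|F_x|^2 |F|^2 - (F \<bullet> F_x)^2 - (F \<bullet> F_y)^2) / |F|^4 \<ge> 0\<close>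
  by Bessel's inequality for the orthogonal pair \<open>F_x, F_y\<close> of equal length. As \<open>ln |\<zeta>|^2\<close> is
  harmonic, \<open>w = |F|^2 |\<zeta>|^(-2(1-d)) exp (e |\<zeta>|^2)\<close> with \<open>d, e > 0\<close> satisfies
  \<open>\<Delta> ln w \<ge> 4 e > 0\<close>, so it has no local maximum in the punctured disc. It tends to 0 at the
  origin (because \<open>F 0 = 0\<close> and \<open>d > 0\<close>), hence for \<open>|z| < R < 1\<close> the value \<open>w z\<close> is
  bounded by the values of \<open>w\<close> on \<open>|\<zeta>| = R\<close>, which are at most \<open>R^(-2(1-d)) exp (e R^2)\<close>.
  Letting \<open>d, e \<rightarrow> 0\<close> and \<open>R \<rightarrow> 1\<close> gives \<open>|F z| \<le> |z|\<close>. Along the radius to \<open>z\<^sub>0\<close> we get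
  \<open>|F (r z\<^sub>0)| \<le> r\<close> while \<open>|F z\<^sub>0| = 1\<close>, so \<open>|dF(z\<^sub>0) z\<^sub>0| \<ge> 1\<close>.
\<close>

lemma isCont_eventually_gt:
  fixes f :: "'a::t2_space \<Rightarrow> 'b::linorder_topology"
  assumes "isCont f x" "c < f x"
  shows "\<forall>\<^sub>F y in nhds x. c < f y"
  using assms by (auto simp: isCont_def tendsto_at_iff_tendsto_nhds dest: order_tendstoD)

lemma local_max_mult_exp_imp_local_max_ln_add:
  fixes f \<phi> :: "'a::t2_space \<Rightarrow> real"
  assumes f: "isCont f p" "0 < f p" and mx: "\<forall>\<^sub>F x in nhds p. f x * exp (\<phi> x) \<le> f p * exp (\<phi> p)"
  shows "\<forall>\<^sub>F x in nhds p. ln (f x) + \<phi> x \<le> ln (f p) + \<phi> p"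
  using isCont_eventually_gt[OF f] mx
proof eventually_elim
  case (elim x)
  then have "ln (f x * exp (\<phi> x)) \<le> ln (f p * exp (\<phi> p))"
    using f(2) by simp
  then show ?case
    using elim f(2) by (simp add: ln_mult)
qed

lemma local_max_imp_second_deriv_nonpos:
  fixes h h' :: "real \<Rightarrow> real"
  assumes d1: "\<forall>\<^sub>F t in nhds 0. (h has_real_derivative h' t) (at t)"
    and d2: "(h' has_real_derivative c) (at 0)"
    and mx: "\<forall>\<^sub>F t in nhds 0. h t \<le> h 0"
  shows "c \<le> 0"
proof (rule ccontr)
  assume "\<not> c \<le> 0"
  then have c: "c > 0" by simp
  from d1 mx have "\<forall>\<^sub>F t in nhds 0. (h has_real_derivative h' t) (at t) \<and> h t \<le> h 0"
    by (rule eventually_conj)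
  then obtain r where r: "r > 0"
    "\<And>t. \<bar>t\<bar> < r \<Longrightarrow> (h has_real_derivative h' t) (at t) \<and> h t \<le> h 0"
    unfolding eventually_nhds_metric dist_real_def by force
  have "h' 0 = 0"
    using DERIV_local_max[where f=h and x=0 and l="h' 0" and d=r] r by force
  with d2 have "((\<lambda>y. h' y / y) \<longlongrightarrow> c) (at_right 0)"
    by (simp add: has_field_derivative_iff filterlim_at_split)
  then have "\<forall>\<^sub>F y in at_right 0. h' y / y > 0"
    using c by (simp add: order_tendstoD(1))
  then obtain s where s: "s > 0" "\<And>y. 0 < y \<Longrightarrow> y < s \<Longrightarrow> h' y / y > 0"
    unfolding eventually_at_right_field by auto
  define t where "t = min (s/2) (r/2)"
  have t: "0 < t" "t < s" "t < r" using s r by (auto simp: t_def)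
  obtain y where y: "0 < y" "y < t" "h t - h 0 = (t - 0) * h' y"
    using MVT2[of 0 t h h'] t r by force
  have "h' y > 0" using s(2)[of y] y t by (simp add: zero_less_divide_iff)
  then have "h t > h 0" using y t by (simp add: algebra_simps)
  moreover have "h t \<le> h 0" using r(2)[of t] t by simp
  ultimately show False by simp
qed

lemma has_real_derivative_inner:
  fixes g k :: "real \<Rightarrow> 'a::real_inner"
  assumes "(g has_vector_derivative v) (at t)" "(k has_vector_derivative w) (at t)"
  shows "((\<lambda>t. g t \<bullet> k t) has_real_derivative (g t \<bullet> w + v \<bullet> k t)) (at t)"
proof -
  have "((\<lambda>t. g t \<bullet> k t) has_derivative (\<lambda>x. g t \<bullet> (x *\<^sub>R w) + (x *\<^sub>R v) \<bullet> k t)) (at t)"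
    using assms unfolding has_vector_derivative_def by (intro has_derivative_inner) auto
  then show ?thesis
    unfolding has_field_derivative_def by (rule has_derivative_eq_rhs) (auto simp: algebra_simps)
qed

text \<open>The second derivative of \<open>ln (g t \<bullet> g t)\<close> at a point where \<open>g, g', g''\<close> take the values
  \<open>x, x', x''\<close>.\<close>

definition second_deriv_ln_inner_self :: "'a::real_inner \<Rightarrow> 'a \<Rightarrow> 'a \<Rightarrow> real" where
  "second_deriv_ln_inner_self x x' x'' =
     (2 * (x' \<bullet> x') + 2 * (x \<bullet> x'')) / (x \<bullet> x) - (2 * (x \<bullet> x'))\<^sup>2 / (x \<bullet> x)\<^sup>2"

lemma local_max_ln_inner_self_add_imp_second_deriv_nonpos:
  fixes g g1 :: "real \<Rightarrow> 'a::real_inner" and \<psi> \<psi>1 :: "real \<Rightarrow> real"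
  assumes dg: "\<forall>\<^sub>F t in nhds 0. (g has_vector_derivative g1 t) (at t)"
    and dg1: "(g1 has_vector_derivative g2) (at 0)"
    and g0: "g 0 \<noteq> 0"
    and d\<psi>: "\<forall>\<^sub>F t in nhds 0. (\<psi> has_real_derivative \<psi>1 t) (at t)"
    and d\<psi>1: "(\<psi>1 has_real_derivative c) (at 0)"
    and mx: "\<forall>\<^sub>F t in nhds 0. ln (g t \<bullet> g t) + \<psi> t \<le> ln (g 0 \<bullet> g 0) + \<psi> 0"
  shows "second_deriv_ln_inner_self (g 0) (g1 0) g2 + c \<le> 0"
proof -
  have dg0: "(g has_vector_derivative g1 0) (at 0)"
    using dg eventually_nhds_x_imp_x by blast
  have "isCont (\<lambda>t. g t \<bullet> g t) 0"
    using has_vector_derivative_continuous[OF dg0] by (intro continuous_intros)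
  then have pos: "\<forall>\<^sub>F t in nhds 0. 0 < g t \<bullet> g t"
    using g0 by (intro isCont_eventually_gt) auto
  define h' where "h' t = 2 * (g t \<bullet> g1 t) / (g t \<bullet> g t) + \<psi>1 t" for t
  have "\<forall>\<^sub>F t in nhds 0. ((\<lambda>t. ln (g t \<bullet> g t) + \<psi> t) has_real_derivative h' t) (at t)"
    using dg d\<psi> pos
  proof eventually_elim
    case (elim t)
    have "((\<lambda>t. g t \<bullet> g t) has_real_derivative (g t \<bullet> g1 t + g1 t \<bullet> g t)) (at t)"
      using elim by (intro has_real_derivative_inner) auto
    then show ?case
      unfolding h'_def using elim by (auto intro!: derivative_eq_intros simp: inner_commute)
  qed
  moreover have "(h' has_real_derivative second_deriv_ln_inner_self (g 0) (g1 0) g2 + c) (at 0)"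
  proof -
    have "((\<lambda>t. g t \<bullet> g1 t) has_real_derivative (g 0 \<bullet> g2 + g1 0 \<bullet> g1 0)) (at 0)"
      using dg0 dg1 by (rule has_real_derivative_inner)
    moreover have "((\<lambda>t. g t \<bullet> g t) has_real_derivative (g 0 \<bullet> g1 0 + g1 0 \<bullet> g 0)) (at 0)"
      using dg0 dg0 by (rule has_real_derivative_inner)
    ultimately show ?thesis
      unfolding h'_def second_deriv_ln_inner_self_def using d\<psi>1 g0
      by (auto intro!: derivative_eq_intros simp: field_simps power2_eq_square inner_commute)
  qed
  ultimately show ?thesis
    using mx by (rule local_max_imp_second_deriv_nonpos)
qed

lemma has_vector_derivative_along_line:
  fixes G :: "complex \<Rightarrow> 'a::real_normed_vector"
  assumes "G differentiable (at (p + of_real t * v))"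
  shows "((\<lambda>t. G (p + of_real t * v)) has_vector_derivative
            frechet_derivative G (at (p + of_real t * v)) v) (at t)"
proof -
  let ?G' = "frechet_derivative G (at (p + of_real t * v))"
  have "((\<lambda>t. p + of_real t * v) has_derivative (\<lambda>s. of_real s * v)) (at t)"
    by (auto intro!: derivative_eq_intros)
  moreover have G': "(G has_derivative ?G') (at (p + of_real t * v))"
    using assms frechet_derivative_works by blast
  ultimately have "((\<lambda>t. G (p + of_real t * v)) has_derivative (\<lambda>s. ?G' (of_real s * v))) (at t)"
    by (rule has_derivative_compose)
  moreover have "?G' (of_real s * v) = s *\<^sub>R ?G' v" for s
    using linear_scale[OF has_derivative_linear[OF G']] by (metis scaleR_conv_of_real)
  ultimately show ?thesis
    unfolding has_vector_derivative_def by simp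
qed

lemma local_max_ln_inner_self_add_along_line_imp_second_deriv_nonpos:
  fixes F :: "complex \<Rightarrow> 'a::real_inner" and \<phi> :: "complex \<Rightarrow> real"
  assumes dF: "\<forall>\<^sub>F \<zeta> in nhds p. F differentiable (at \<zeta>)"
    and dF': "(\<lambda>\<zeta>. frechet_derivative F (at \<zeta>) v) differentiable (at p)"
    and Fp: "F p \<noteq> 0"
    and d\<phi>: "\<forall>\<^sub>F t in nhds 0. ((\<lambda>t. \<phi> (p + of_real t * v)) has_real_derivative \<phi>1 t) (at t)"
    and d\<phi>1: "(\<phi>1 has_real_derivative c) (at 0)"
    and mx: "\<forall>\<^sub>F \<zeta> in nhds p. ln (F \<zeta> \<bullet> F \<zeta>) + \<phi> \<zeta> \<le> ln (F p \<bullet> F p) + \<phi> p"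
  shows "second_deriv_ln_inner_self (F p) (frechet_derivative F (at p) v)
           (frechet_derivative (\<lambda>\<zeta>. frechet_derivative F (at \<zeta>) v) (at p) v) + c \<le> 0"
proof -
  have "(\<lambda>t. p + of_real t * v) \<midarrow>0\<rightarrow> p"
    by (intro tendsto_eq_intros) auto
  then have line: "filterlim (\<lambda>t. p + of_real t * v) (nhds p) (nhds 0)"
    using tendsto_at_iff_tendsto_nhds[of "\<lambda>t. p + of_real t * v" 0] by simp
  have dg: "\<forall>\<^sub>F t in nhds 0. ((\<lambda>t. F (p + of_real t * v)) has_vector_derivative
                           frechet_derivative F (at (p + of_real t * v)) v) (at t)"
    using eventually_compose_filterlim[OF dF line]
    by eventually_elim (rule has_vector_derivative_along_line)
  have dg1: "((\<lambda>t. frechet_derivative F (at (p + of_real t * v)) v) has_vector_derivative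
      frechet_derivative (\<lambda>\<zeta>. frechet_derivative F (at \<zeta>) v) (at p) v) (at 0)"
    using has_vector_derivative_along_line[of _ p 0 v] dF' by simp
  have mx': "\<forall>\<^sub>F t in nhds 0.
      ln (F (p + of_real t * v) \<bullet> F (p + of_real t * v)) + \<phi> (p + of_real t * v)
      \<le> ln (F (p + of_real 0 * v) \<bullet> F (p + of_real 0 * v)) + \<phi> (p + of_real 0 * v)"
    using eventually_compose_filterlim[OF mx line] by simp
  show ?thesis
    using local_max_ln_inner_self_add_imp_second_deriv_nonpos[OF dg dg1 _ d\<phi> d\<phi>1 mx'] Fp by simp
qed

text \<open>The logarithm of the weight \<open>|\<zeta>|^(-2(1-d)) exp (e |\<zeta>|^2)\<close>, as a function of \<open>s = |\<zeta>|^2\<close>.\<close>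

definition log_weight :: "real \<Rightarrow> real \<Rightarrow> real \<Rightarrow> real" where
  "log_weight d e s = e * s - (1 - d) * ln s"

lemma norm_add_line_power2:
  fixes p v :: complex
  assumes "norm v = 1"
  shows "(norm (p + of_real t * v))\<^sup>2 = (norm p)\<^sup>2 + 2 * t * (p \<bullet> v) + t\<^sup>2"
proof -
  have "v \<bullet> v = 1"
    using assms by (simp add: dot_square_norm)
  then show ?thesis
    unfolding power2_norm_eq_inner scaleR_conv_of_real[symmetric]
    by (simp add: inner_add_left inner_add_right inner_commute algebra_simps power2_eq_square)
qed

lemma log_weight_along_line_has_derivative:
  fixes p v :: complex and d e :: real
  assumes v: "norm v = 1" and p: "p \<noteq> 0"
  defines "\<phi>1 \<equiv> \<lambda>t. (2 * e - 2 * (1 - d) / (norm (p + of_real t * v))\<^sup>2) * (p \<bullet> v + t)"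
  shows "\<forall>\<^sub>F t in nhds 0. ((\<lambda>t. log_weight d e ((norm (p + of_real t * v))\<^sup>2))
            has_real_derivative \<phi>1 t) (at t)"
    and "(\<phi>1 has_real_derivative
            2 * e - 2 * (1 - d) * ((norm p)\<^sup>2 - 2 * (p \<bullet> v)\<^sup>2) / (norm p)^4) (at 0)"
proof -
  define q where "q t = (norm (p + of_real t * v))\<^sup>2" for t
  have dq: "(q has_real_derivative 2 * (p \<bullet> v + t)) (at t)" for t
    unfolding q_def norm_add_line_power2[OF v] by (auto intro!: derivative_eq_intros)
  have q0: "q 0 = (norm p)\<^sup>2"
    by (simp add: q_def)
  have "\<forall>\<^sub>F t in nhds 0. 0 < q t"
    using p q0 DERIV_isCont[OF dq] by (intro isCont_eventually_gt) auto
  then show "\<forall>\<^sub>F t in nhds 0. ((\<lambda>t. log_weight d e ((norm (p + of_real t * v))\<^sup>2))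
            has_real_derivative \<phi>1 t) (at t)"
  proof eventually_elim
    case (elim t)
    have "((\<lambda>t. e * q t - (1 - d) * ln (q t)) has_real_derivative
             e * (2 * (p \<bullet> v + t)) - (1 - d) * (2 * (p \<bullet> v + t) / q t)) (at t)"
      using dq elim by (auto intro!: derivative_eq_intros)
    then show ?case
      unfolding \<phi>1_def log_weight_def q_def[symmetric] by (simp add: algebra_simps diff_divide_distrib)
  qed
  have "(\<phi>1 has_real_derivative
          2 * (1 - d) * (2 * (p \<bullet> v)) / (q 0)\<^sup>2 * (p \<bullet> v) + (2 * e - 2 * (1 - d) / q 0)) (at 0)"
    unfolding \<phi>1_def q_def[symmetric] using dq[of 0] q0 p
    by (auto intro!: derivative_eq_intros simp: power2_eq_square)
  then show "(\<phi>1 has_real_derivative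
            2 * e - 2 * (1 - d) * ((norm p)\<^sup>2 - 2 * (p \<bullet> v)\<^sup>2) / (norm p)^4) (at 0)"
    by (rule DERIV_cong) (use p in \<open>simp add: q0 field_simps power2_eq_square power4_eq_xxxx\<close>)
qed

lemma inner_power2_add_inner_power2_le:
  fixes x a b :: "'a::real_inner"
  assumes "a \<bullet> a = b \<bullet> b" "a \<bullet> b = 0"
  shows "(x \<bullet> a)\<^sup>2 + (x \<bullet> b)\<^sup>2 \<le> (a \<bullet> a) * (x \<bullet> x)"
proof (cases "a = 0")
  case True
  then show ?thesis using assms by simp
next
  case False
  define s where "s = a \<bullet> a"
  have s: "s > 0" using False by (simp add: s_def)
  have "0 \<le> (s *\<^sub>R x - (x \<bullet> a) *\<^sub>R a - (x \<bullet> b) *\<^sub>R b) \<bullet> (s *\<^sub>R x - (x \<bullet> a) *\<^sub>R a - (x \<bullet> b) *\<^sub>R b)"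
    by simp
  also have "\<dots> = s * (s * (x \<bullet> x) - ((x \<bullet> a)\<^sup>2 + (x \<bullet> b)\<^sup>2))"
    using assms unfolding s_def
    by (simp add: inner_diff_left inner_diff_right inner_commute power2_eq_square algebra_simps)
  finally show ?thesis
    using s unfolding s_def by (simp add: zero_le_mult_iff)
qed

lemma second_deriv_ln_inner_self_conformal_harmonic_nonneg:
  fixes x a b a' b' :: "'a::real_inner"
  assumes x: "x \<noteq> 0" and conformal: "a \<bullet> a = b \<bullet> b" "a \<bullet> b = 0" and harmonic: "a' + b' = 0"
  shows "0 \<le> second_deriv_ln_inner_self x a a' + second_deriv_ln_inner_self x b b'"
proof -
  define f where "f = x \<bullet> x"
  have f: "0 < f" using x by (simp add: f_def)
  have "second_deriv_ln_inner_self x a a' + second_deriv_ln_inner_self x b b'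
      = 4 * ((a \<bullet> a) * f - ((x \<bullet> a)\<^sup>2 + (x \<bullet> b)\<^sup>2)) / f\<^sup>2"
    using f conformal harmonic[unfolded add_eq_0_iff]
    unfolding second_deriv_ln_inner_self_def f_def[symmetric]
    by (simp add: field_simps power2_eq_square)
  also have "\<dots> \<ge> 0"
    using inner_power2_add_inner_power2_le[OF conformal, of x] f by (simp add: f_def)
  finally show ?thesis .
qed

lemma conformal_minimal_ln_weighted_no_local_max:
  fixes F :: "complex \<Rightarrow> 'a::real_inner"
  assumes cmi: "conformal_minimal_immersion_on F (ball 0 1)"
    and p: "p \<in> ball 0 1" "p \<noteq> 0" and Fp: "F p \<noteq> 0" and e: "0 < e"
  shows "\<not> (\<forall>\<^sub>F \<zeta> in nhds p. ln (F \<zeta> \<bullet> F \<zeta>) + log_weight d e ((norm \<zeta>)\<^sup>2)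
                              \<le> ln (F p \<bullet> F p) + log_weight d e ((norm p)\<^sup>2))"
proof
  assume mx: "\<forall>\<^sub>F \<zeta> in nhds p. ln (F \<zeta> \<bullet> F \<zeta>) + log_weight d e ((norm \<zeta>)\<^sup>2)
                              \<le> ln (F p \<bullet> F p) + log_weight d e ((norm p)\<^sup>2)"
  have H: "harmonic_on F (ball 0 1)"
    and conf: "pdx F p \<bullet> pdx F p = pdy F p \<bullet> pdy F p" "pdx F p \<bullet> pdy F p = 0"
    using cmi p unfolding conformal_minimal_immersion_on_def by auto
  have "\<forall>\<^sub>F \<zeta> in nhds p. \<zeta> \<in> ball 0 1"
    using p by (intro eventually_nhds_in_open) auto
  then have dF: "\<forall>\<^sub>F \<zeta> in nhds p. F differentiable (at \<zeta>)"
    by (rule eventually_mono) (use H in \<open>simp add: harmonic_on_def differentiable_on_eq_differentiable_at\<close>)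
  have dFx: "pdx F differentiable (at p)" and dFy: "pdy F differentiable (at p)"
    and lap: "pdx (pdx F) p + pdy (pdy F) p = 0"
    using H p unfolding harmonic_on_def by (auto simp: differentiable_on_eq_differentiable_at)
  have pd: "pdx G = (\<lambda>\<zeta>. frechet_derivative G (at \<zeta>) 1)" "pdy G = (\<lambda>\<zeta>. frechet_derivative G (at \<zeta>) \<i>)"
    for G :: "complex \<Rightarrow> 'a"
    by (simp_all add: fun_eq_iff pdx_def pdy_def)
  have "second_deriv_ln_inner_self (F p) (pdx F p) (pdx (pdx F) p)
          + (2 * e - 2 * (1 - d) * ((norm p)\<^sup>2 - 2 * (Re p)\<^sup>2) / (norm p)^4) \<le> 0"
    using local_max_ln_inner_self_add_along_line_imp_second_deriv_nonpos[OF dF _ Fp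
        log_weight_along_line_has_derivative[where v=1, OF _ p(2)] mx] dFx
    by (simp add: pd)
  moreover have "second_deriv_ln_inner_self (F p) (pdy F p) (pdy (pdy F) p)
          + (2 * e - 2 * (1 - d) * ((norm p)\<^sup>2 - 2 * (Im p)\<^sup>2) / (norm p)^4) \<le> 0"
    using local_max_ln_inner_self_add_along_line_imp_second_deriv_nonpos[OF dF _ Fp
        log_weight_along_line_has_derivative[where v=\<i>, OF _ p(2)] mx] dFy
    by (simp add: pd)
  moreover have "0 \<le> second_deriv_ln_inner_self (F p) (pdx F p) (pdx (pdx F) p)
                    + second_deriv_ln_inner_self (F p) (pdy F p) (pdy (pdy F) p)"
    using Fp conf lap by (rule second_deriv_ln_inner_self_conformal_harmonic_nonneg)
  moreover have "2 * (1 - d) * ((norm p)\<^sup>2 - 2 * (Re p)\<^sup>2) / (norm p)^4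
                + 2 * (1 - d) * ((norm p)\<^sup>2 - 2 * (Im p)\<^sup>2) / (norm p)^4 = 0"
    unfolding add_divide_distrib[symmetric] by (simp add: cmod_power2 algebra_simps)
  ultimately show False
    using e by linarith
qed

lemma differentiable_at_imp_eventually_norm_le_linear:
  fixes F :: "'a::real_normed_vector \<Rightarrow> 'b::real_normed_vector"
  assumes "F differentiable (at x)"
  obtains C where "\<forall>\<^sub>F y in at x. norm (F y - F x) \<le> C * norm (y - x)"
proof -
  obtain D where D: "(F has_derivative D) (at x)"
    using assms unfolding differentiable_def by blast
  obtain K where K: "\<And>h. norm (D h) \<le> norm h * K"
    using bounded_linear.bounded[OF has_derivative_bounded_linear[OF D]] by blast
  have "\<forall>\<^sub>F y in at x. norm (F y - F x - D (y - x)) \<le> 1 * norm (y - x)"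
    using D unfolding has_derivative_within_alt2 by (metis zero_less_one)
  then have "\<forall>\<^sub>F y in at x. norm (F y - F x) \<le> (K + 1) * norm (y - x)"
  proof eventually_elim
    case (elim y)
    have "norm (F y - F x) \<le> norm (D (y - x)) + norm (F y - F x - D (y - x))"
      by (rule norm_triangle_sub)
    then show ?case
      using elim K[of "y - x"] by (simp add: algebra_simps)
  qed
  then show ?thesis by (rule that)
qed

lemma weighted_inner_self_tendsto_zero:
  fixes F :: "complex \<Rightarrow> 'a::real_inner"
  assumes dF: "F differentiable (at 0)" and F0: "F 0 = 0" and d: "0 < d"
  shows "((\<lambda>\<zeta>. F \<zeta> \<bullet> F \<zeta> * exp (log_weight d e ((norm \<zeta>)\<^sup>2))) \<longlongrightarrow> 0) (at 0)"
proof -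
  obtain C where C: "\<forall>\<^sub>F \<zeta> in at 0. norm (F \<zeta>) \<le> C * norm \<zeta>"
    using differentiable_at_imp_eventually_norm_le_linear[OF dF] F0 by auto
  moreover have "\<forall>\<^sub>F \<zeta> in at (0::complex). \<zeta> \<noteq> 0"
    by (simp add: eventually_at_filter)
  ultimately have "\<forall>\<^sub>F \<zeta> in at 0. norm (F \<zeta> \<bullet> F \<zeta> * exp (log_weight d e ((norm \<zeta>)\<^sup>2)))
                      \<le> C\<^sup>2 * ((norm \<zeta>)\<^sup>2 powr d * exp (e * (norm \<zeta>)\<^sup>2))"
  proof eventually_elim
    case (elim \<zeta>)
    have "F \<zeta> \<bullet> F \<zeta> \<le> C\<^sup>2 * (norm \<zeta>)\<^sup>2"
      using elim power_mono[OF elim(1), of 2] by (simp add: power2_norm_eq_inner power_mult_distrib)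
    then have "F \<zeta> \<bullet> F \<zeta> * exp (log_weight d e ((norm \<zeta>)\<^sup>2))
               \<le> C\<^sup>2 * ((norm \<zeta>)\<^sup>2 * exp (log_weight d e ((norm \<zeta>)\<^sup>2)))"
      unfolding mult.assoc[symmetric] by (rule mult_right_mono) simp
    also have "(norm \<zeta>)\<^sup>2 * exp (log_weight d e ((norm \<zeta>)\<^sup>2))
               = (norm \<zeta>)\<^sup>2 powr d * exp (e * (norm \<zeta>)\<^sup>2)"
      using elim by (simp add: log_weight_def powr_def exp_add[symmetric] exp_diff algebra_simps)
    finally show ?case
      by simp
  qed
  moreover have "((\<lambda>\<zeta>. C\<^sup>2 * ((norm \<zeta>)\<^sup>2 powr d * exp (e * (norm \<zeta>)\<^sup>2))) \<longlongrightarrow> 0) (at 0)"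
    using d by (auto intro!: tendsto_eq_intros tendsto_zero_powrI)
  ultimately show ?thesis
    by (rule Lim_null_comparison)
qed

lemma exists_frontier_ge_if_no_interior_local_max:
  fixes w :: "'a::metric_space \<Rightarrow> real"
  assumes K: "compact K" and w: "continuous_on K w" and x: "x \<in> K"
    and no_max: "\<And>p. p \<in> interior K \<Longrightarrow> w x \<le> w p \<Longrightarrow> \<not> (\<forall>\<^sub>F y in nhds p. w y \<le> w p)"
  shows "\<exists>q\<in>frontier K. w x \<le> w q"
proof -
  obtain p where p: "p \<in> K" "\<And>y. y \<in> K \<Longrightarrow> w y \<le> w p"
    using continuous_attains_sup[OF K _ w] x by blast
  have "p \<notin> interior K"
  proof
    assume int: "p \<in> interior K"
    have "\<forall>\<^sub>F y in nhds p. y \<in> interior K"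
      by (rule eventually_nhds_in_open[OF open_interior int])
    then have "\<forall>\<^sub>F y in nhds p. w y \<le> w p"
      by (rule eventually_mono) (use p(2) interior_subset in blast)
    with no_max[OF int p(2)[OF x]] show False by blast
  qed
  then show ?thesis
    using p x compact_imp_closed[OF K] by (auto simp: frontier_def)
qed

lemma frontier_annulus_subset:
  fixes a :: "'a::real_normed_vector"
  shows "frontier (cball a R - ball a \<rho>) \<subseteq> sphere a \<rho> \<union> sphere a R"
proof -
  have "ball a R - cball a \<rho> \<subseteq> interior (cball a R - ball a \<rho>)"
    by (rule interior_maximal) auto
  moreover have "closure (cball a R - ball a \<rho>) = cball a R - ball a \<rho>"
    by (simp add: closed_Diff)
  ultimately have "frontier (cball a R - ball a \<rho>) \<subseteq> (cball a R - ball a \<rho>) - (ball a R - cball a \<rho>)"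
    unfolding frontier_def by blast
  then show ?thesis
    by auto
qed

lemma punctured_disc_le_circle_if_no_local_max:
  fixes w :: "complex \<Rightarrow> real"
  assumes cont: "continuous_on (ball 0 1 - {0}) w" and lim0: "(w \<longlongrightarrow> 0) (at 0)"
    and no_max: "\<And>p. p \<in> ball 0 1 - {0} \<Longrightarrow> 0 < w p \<Longrightarrow> \<not> (\<forall>\<^sub>F \<zeta> in nhds p. w \<zeta> \<le> w p)"
    and wz: "0 < w z" and z: "0 < norm z" "norm z < R" "R < 1"
  shows "\<exists>q. norm q = R \<and> w z \<le> w q"
proof -
  have "\<forall>\<^sub>F \<zeta> in at 0. w \<zeta> < w z"
    using lim0 wz by (rule order_tendstoD(2))
  then obtain \<delta> where \<delta>: "0 < \<delta>" "\<And>\<zeta>. \<zeta> \<noteq> 0 \<Longrightarrow> norm \<zeta> < \<delta> \<Longrightarrow> w \<zeta> < w z"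
    unfolding eventually_at dist_norm by auto
  define \<rho> where "\<rho> = min \<delta> (norm z) / 2"
  have \<rho>: "0 < \<rho>" "\<rho> < \<delta>" "\<rho> < norm z"
    using \<delta> z by (auto simp: \<rho>_def min_def)
  define K where "K = cball 0 R - ball (0::complex) \<rho>"
  have K: "compact K"
    unfolding K_def Diff_eq by (intro compact_Int_closed compact_cball closed_Compl open_ball)
  have zK: "z \<in> K" and K_sub: "K \<subseteq> ball 0 1 - {0}"
    using z \<rho> by (auto simp: K_def)
  have "\<exists>q\<in>frontier K. w z \<le> w q"
  proof (rule exists_frontier_ge_if_no_interior_local_max[OF K _ zK])
    show "continuous_on K w"
      using cont K_sub by (rule continuous_on_subset)
    fix p assume "p \<in> interior K" "w z \<le> w p"
    then show "\<not> (\<forall>\<^sub>F y in nhds p. w y \<le> w p)"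
      using no_max[of p] interior_subset K_sub wz by force
  qed
  then obtain q where q: "q \<in> sphere 0 \<rho> \<union> sphere 0 R" "w z \<le> w q"
    using frontier_annulus_subset[of 0 R \<rho>] unfolding K_def by blast
  then show ?thesis
    using \<delta>(2)[of q] \<rho> by fastforce
qed

lemma conformal_minimal_weighted_inner_self_le:
  fixes F :: "complex \<Rightarrow> 'a::real_inner"
  assumes cmi: "conformal_minimal_immersion_on F (ball 0 1)"
    and inb: "\<forall>z\<in>ball 0 1. F z \<in> ball 0 1" and F0: "F 0 = 0"
    and z: "norm z < R" "R < 1" and d: "0 < d" and e: "0 < e"
  shows "F z \<bullet> F z * exp (log_weight d e ((norm z)\<^sup>2)) \<le> exp (log_weight d e (R\<^sup>2))"
proof (cases "F z = 0")
  case True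
  then show ?thesis by simp
next
  case False
  define w where "w \<zeta> = F \<zeta> \<bullet> F \<zeta> * exp (log_weight d e ((norm \<zeta>)\<^sup>2))" for \<zeta>
  have dF: "F differentiable_on ball 0 1"
    using cmi by (simp add: conformal_minimal_immersion_on_def harmonic_on_def)
  have contF: "isCont F p" if "p \<in> ball 0 1" for p
    using dF that by (simp add: differentiable_on_eq_differentiable_at differentiable_imp_continuous_within)
  have "\<exists>q. norm q = R \<and> w z \<le> w q"
  proof (rule punctured_disc_le_circle_if_no_local_max[OF _ _ _ _ _ z])
    show "continuous_on (ball 0 1 - {0}) w"
      unfolding w_def log_weight_def using contF
      by (intro continuous_intros continuous_at_imp_continuous_on) auto
    show "(w \<longlongrightarrow> 0) (at 0)"
      unfolding w_def using dF F0 d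
      by (intro weighted_inner_self_tendsto_zero) (simp_all add: differentiable_on_eq_differentiable_at)
    show "0 < w z" "0 < norm z"
      using False F0 by (auto simp: w_def)
    fix p assume p: "p \<in> ball 0 1 - {0}" "0 < w p"
    then have Fp: "F p \<noteq> 0"
      by (auto simp: w_def)
    have "isCont (\<lambda>\<zeta>. F \<zeta> \<bullet> F \<zeta>) p"
      using contF p by (intro continuous_intros) auto
    then show "\<not> (\<forall>\<^sub>F \<zeta> in nhds p. w \<zeta> \<le> w p)"
      unfolding w_def using local_max_mult_exp_imp_local_max_ln_add
        conformal_minimal_ln_weighted_no_local_max[OF cmi _ _ Fp e] p Fp by force
  qed
  then obtain q where q: "norm q = R" "w z \<le> w q"
    by blast
  then have "norm (F q) < 1"
    using inb z by auto
  then have "F q \<bullet> F q \<le> 1"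
    unfolding dot_square_norm by (intro power_le_one) auto
  then have "w q \<le> exp (log_weight d e (R\<^sup>2))"
    unfolding w_def q(1) by (intro mult_left_le_one_le) auto
  then show ?thesis
    using q(2) by (simp add: w_def)
qed

lemma conformal_minimal_Schwarz:
  fixes F :: "complex \<Rightarrow> 'a::real_inner"
  assumes cmi: "conformal_minimal_immersion_on F (ball 0 1)"
    and inb: "\<forall>z\<in>ball 0 1. F z \<in> ball 0 1" and F0: "F 0 = 0"
    and z: "norm z < 1"
  shows "norm (F z) \<le> norm z"
proof (cases "z = 0")
  case True
  with F0 show ?thesis by simp
next
  case False
  have nz: "0 < norm z"
    using False by simp
  define s where "s = (norm z)\<^sup>2"
  define \<Phi> where "\<Phi> x = exp (log_weight (fst x) (fst (snd x)) ((snd (snd x))\<^sup>2)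
                             - log_weight (fst x) (fst (snd x)) s)" for x :: "real \<times> real \<times> real"
  define S :: "(real \<times> real \<times> real) set" where "S = {0<..<1} \<times> {0<..<1} \<times> {norm z<..<1}"
  have closure_S: "closure S = {0..1} \<times> {0..1} \<times> {norm z..1}"
    using z by (simp add: S_def closure_Times)
  have "continuous_on (closure S) \<Phi>"
    unfolding \<Phi>_def log_weight_def closure_S using nz
    by (intro continuous_intros) (force simp: s_def)+
  moreover have "(0, 0, 1) \<in> closure S"
    using z by (simp add: closure_S)
  moreover have "F z \<bullet> F z \<le> \<Phi> x" if "x \<in> S" for x
    using conformal_minimal_weighted_inner_self_le[OF cmi inb F0, of z "snd (snd x)" "fst x" "fst (snd x)"] that
    by (auto simp: S_def \<Phi>_def s_def exp_diff pos_le_divide_eq)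
  ultimately have "F z \<bullet> F z \<le> \<Phi> (0, 0, 1)"
    by (rule continuous_ge_on_closure)
  also have "\<Phi> (0, 0, 1) = s"
    using False by (simp add: \<Phi>_def log_weight_def s_def)
  finally show ?thesis
    unfolding s_def dot_square_norm by (rule power2_le_imp_le) simp
qed

lemma norm_radial_derivative_ge_one:
  fixes F :: "complex \<Rightarrow> 'a::real_normed_vector"
  assumes L: "(F has_derivative L) (at z0 within insert z0 (ball 0 1))"
    and z0: "norm z0 = 1" and Fz0: "norm (F z0) = 1"
    and radial: "\<And>r. 0 \<le> r \<Longrightarrow> r < 1 \<Longrightarrow> norm (F (of_real r * z0)) \<le> r"
  shows "1 \<le> norm (L z0)"
proof (rule field_le_epsilon)
  fix \<epsilon> :: real
  assume "0 < \<epsilon>"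
  then obtain \<delta> where \<delta>: "0 < \<delta>" and approx: "\<And>y. y \<in> insert z0 (ball 0 1) \<Longrightarrow>
      norm (y - z0) < \<delta> \<Longrightarrow> norm (F y - F z0 - L (y - z0)) \<le> \<epsilon> * norm (y - z0)"
    using L unfolding has_derivative_within_alt by blast
  define r where "r = max 0 (1 - \<delta> / 2)"
  have r: "0 \<le> r" "r < 1" "1 - r < \<delta>"
    using \<delta> by (auto simp: r_def)
  define y where "y = of_real r * z0"
  have y_z0: "y - z0 = (r - 1) *\<^sub>R z0"
    by (simp add: y_def scaleR_conv_of_real algebra_simps)
  have norm_y_z0: "norm (y - z0) = 1 - r"
    using r z0 by (simp add: y_z0)
  have "y \<in> ball 0 1"
    using r z0 by (simp add: y_def norm_mult)
  have L_y_z0: "L (y - z0) = (r - 1) *\<^sub>R L z0"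
    unfolding y_z0 by (rule linear_scale[OF bounded_linear.linear[OF has_derivative_bounded_linear[OF L]]])
  have norm_L: "norm (L (y - z0)) = (1 - r) * norm (L z0)"
    using r by (simp only: L_y_z0 norm_scaleR) simp
  have err: "norm (F y - F z0 - L (y - z0)) \<le> \<epsilon> * (1 - r)"
    using approx[of y] \<open>y \<in> ball 0 1\<close> norm_y_z0 r by simp
  have "1 - r \<le> norm (F z0) - norm (F y)"
    using radial[OF r(1,2)] Fz0 by (simp add: y_def)
  also have "\<dots> \<le> norm (L (y - z0)) + norm (F y - F z0 - L (y - z0))"
    by (smt (verit) norm_minus_commute norm_triangle_ineq4 norm_triangle_sub diff_diff_eq2)
  also have "\<dots> \<le> (1 - r) * (norm (L z0) + \<epsilon>)"
    using norm_L err by (simp add: algebra_simps)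
  finally show "1 \<le> norm (L z0) + \<epsilon>"
    using r by simp
qed

theorem theorem1p3:
  fixes F :: "complex \<Rightarrow> real ^ 'n" and z0 :: complex and L :: "complex \<Rightarrow> real ^ 'n"
  assumes "CARD('n) \<ge> 3"
    and "conformal_minimal_immersion_on F (ball 0 1)"
    and "\<forall>z\<in>ball 0 1. F z \<in> ball 0 1"
    and "F 0 = 0"
    and "norm z0 = 1"
    and "F z0 \<in> sphere 0 1"
    and "continuous (at z0 within insert z0 (ball 0 1)) F"
    and "(F has_derivative L) (at z0 within insert z0 (ball 0 1))"
  shows "onorm L \<ge> 1"
proof -
  have "1 \<le> norm (L z0)"
  proof (rule norm_radial_derivative_ge_one[OF assms(8,5)])
    show "norm (F z0) = 1"
      using assms(6) by simp
    fix r :: real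
    assume "0 \<le> r" "r < 1"
    then show "norm (F (of_real r * z0)) \<le> r"
      using conformal_minimal_Schwarz[OF assms(2-4), of "of_real r * z0"] assms(5)
      by (simp add: norm_mult)
  qed
  also have "norm (L z0) \<le> onorm L * norm z0"
    using has_derivative_bounded_linear[OF assms(8)] by (rule onorm)
  finally show ?thesis
    using assms(5) by simp
qed

end
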